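(* For $n\in\mathbb{N}_{\geq1}$ let $\widetilde c(n)$ be the number of rooted binary trees with $n$ leaves and minimal Colless index, and $\widetilde s(n)$ the number of rooted binary trees with $n$ leaves and minimal Sackin index. Then $\widetilde c(n)\leq\widetilde s(n)$.
   Context: A rooted binary tree with $n\geq 2$ leaves is a rooted tree whose root has degree 2 and all other internal nodes have degree 3; for $n=1$ it is a single node; trees are counted up to isomorphism. For a node $u$ let $n_u$ be the number of leaves in the subtree rooted at $u$. The Colless index is $\mathcal{C}(T)=\sum_v|n_{v_1}-n_{v_2}|$ over internal nodes $v$ with children $v_1,v_2$; the Sackin index is $\mathcal{S}(T)=\sum_u n_u$ over internal nodes $u$. Minimality is among all rooted binary trees with $n$ leaves. *)

theory Defs
  imports Main
begin

text \<open>Rooted binary trees (unlabelled, ordered representation); a leaf, or a root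
with two children.  Isomorphism (as rooted unordered trees) is generated by
swapping children at internal nodes.\<close>

datatype btree = Leaf | Node btree btree

fun leaves :: "btree \<Rightarrow> nat" where
  "leaves Leaf = 1"
| "leaves (Node l r) = leaves l + leaves r"

inductive iso :: "btree \<Rightarrow> btree \<Rightarrow> bool" where
  iso_leaf: "iso Leaf Leaf"
| iso_node: "iso l l' \<Longrightarrow> iso r r' \<Longrightarrow> iso (Node l r) (Node l' r')"
| iso_swap: "iso l r' \<Longrightarrow> iso r l' \<Longrightarrow> iso (Node l r) (Node l' r')"

definition isorel :: "(btree \<times> btree) set" where
  "isorel = {(s, t). iso s t}"

fun colless :: "btree \<Rightarrow> nat" where
  "colless Leaf = 0"
| "colless (Node l r) = colless l + colless r + nat \<bar>int (leaves l) - int (leaves r)\<bar>"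

fun sackin :: "btree \<Rightarrow> nat" where
  "sackin Leaf = 0"
| "sackin (Node l r) = sackin l + sackin r + leaves l + leaves r"

definition trees_with :: "nat \<Rightarrow> btree set" where
  "trees_with n = {t. leaves t = n}"

definition min_colless_trees :: "nat \<Rightarrow> btree set" where
  "min_colless_trees n = {t \<in> trees_with n. \<forall>t' \<in> trees_with n. colless t \<le> colless t'}"

definition min_sackin_trees :: "nat \<Rightarrow> btree set" where
  "min_sackin_trees n = {t \<in> trees_with n. \<forall>t' \<in> trees_with n. sackin t \<le> sackin t'}"

definition c_tilde :: "nat \<Rightarrow> nat" where
  "c_tilde n = card (min_colless_trees n // isorel)"

definition s_tilde :: "nat \<Rightarrow> nat" where
  "s_tilde n = card (min_sackin_trees n // isorel)"

end

theory Submission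
  imports Defs
begin

text \<open>Let colless_mb n be the Colless index of the maximally balanced tree with n leaves.
Along the recursion of the Colless index, colless t - colless_mb (leaves t) is the sum over the
internal nodes of t of a defect depending only on the two subtree sizes a and b. Strong induction
on a + b, through the halving recursion of colless_mb, shows that the defect is nonnegative and
vanishes only if a and b lie in a common interval [2^j, 2^(j+1)]. So colless_mb n is the minimal
Colless index, and every Colless-minimal tree is balanced in this dyadic sense at each node.
For every j, n(j+2) - 2^(j+1) is a lower bound for the Sackin index; it is largest for the j with
2^j \<le> n \<le> 2^(j+1), and dyadically balanced trees attain it there. Hence every Colless-minimal
tree is Sackin-minimal, and this inclusion survives passing to isomorphism classes.\<close>

fun mb_tree :: "nat \<Rightarrow> btree" where
  "mb_tree n = (if n \<le> 1 then Leaf else Node (mb_tree ((n + 1) div 2)) (mb_tree (n div 2)))"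

declare mb_tree.simps [simp del]

lemma leaves_mb_tree: "1 \<le> n \<Longrightarrow> leaves (mb_tree n) = n"
proof (induction n rule: mb_tree.induct)
  case (1 n)
  then show ?case by (subst mb_tree.simps) auto
qed

fun colless_mb :: "nat \<Rightarrow> nat" where
  "colless_mb n =
    (if n \<le> 1 then 0 else colless_mb ((n + 1) div 2) + colless_mb (n div 2) + n mod 2)"

declare colless_mb.simps [simp del]

lemma colless_mb_1 [simp]: "colless_mb (Suc 0) = 0"
  by (simp add: colless_mb.simps)

lemma colless_mb_double: "1 \<le> x \<Longrightarrow> colless_mb (2 * x) = 2 * colless_mb x"
  by (subst colless_mb.simps) simp

lemma colless_mb_odd:
  "1 \<le> x \<Longrightarrow> colless_mb (2 * x + 1) = colless_mb (x + 1) + colless_mb x + 1"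
  by (subst colless_mb.simps) simp

lemma colless_mb_tree: "1 \<le> n \<Longrightarrow> colless (mb_tree n) = colless_mb n"
proof (induction n rule: mb_tree.induct)
  case (1 n)
  show ?case
  proof (cases "n \<le> 1")
    case True
    then have "n = 1" using "1.prems" by simp
    then show ?thesis by (subst mb_tree.simps) simp
  next
    case False
    have "(n + 1) div 2 = n div 2 + n mod 2" by presburger
    then show ?thesis
      using False "1.IH" leaves_mb_tree[of "(n + 1) div 2"] leaves_mb_tree[of "n div 2"]
      by (simp add: mb_tree.simps[of n] colless_mb.simps[of n])
  qed
qed

definition colless_defect :: "nat \<Rightarrow> nat \<Rightarrow> int" where
  "colless_defect a b =
    int (colless_mb a) + int (colless_mb b) + \<bar>int a - int b\<bar> - int (colless_mb (a + b))"

lemma colless_defect_commute: "colless_defect a b = colless_defect b a"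
  unfolding colless_defect_def by (simp add: add.commute abs_minus_commute)

lemma colless_defect_diag: "1 \<le> a \<Longrightarrow> colless_defect a a = 0"
  unfolding colless_defect_def using colless_mb_double[of a, unfolded mult_2] by simp

lemma colless_defect_even_one:
  "1 \<le> x \<Longrightarrow> colless_defect (2 * x) 1 = colless_defect x 1 + int x - 1"
  unfolding colless_defect_def using colless_mb_double[of x] colless_mb_odd[of x] by simp

lemma colless_defect_odd_one:
  "1 \<le> x \<Longrightarrow> colless_defect (2 * x + 1) 1 = colless_defect x 1 + int x + 2"
  unfolding colless_defect_def using colless_mb_double[of "x + 1"] colless_mb_odd[of x]
  by (simp add: algebra_simps)

lemma colless_defect_odd_odd:
  "1 \<le> y \<Longrightarrow> y < x \<Longrightarrow>
    colless_defect (2 * x + 1) (2 * y + 1) = colless_defect (x + 1) y + colless_defect x (y + 1) + 2"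
  unfolding colless_defect_def
  using colless_mb_odd[of x] colless_mb_odd[of y] colless_mb_double[of "x + y + 1"]
  by (simp add: algebra_simps)

lemma colless_defect_odd_even:
  "1 \<le> y \<Longrightarrow> y \<le> x \<Longrightarrow>
    colless_defect (2 * x + 1) (2 * y) = colless_defect (x + 1) y + colless_defect x y"
  unfolding colless_defect_def
  using colless_mb_odd[of x] colless_mb_double[of y] colless_mb_odd[of "x + y"]
  by (simp add: algebra_simps)

lemma colless_defect_even_odd:
  "1 \<le> y \<Longrightarrow> y < x \<Longrightarrow>
    colless_defect (2 * x) (2 * y + 1) = colless_defect x (y + 1) + colless_defect x y"
  unfolding colless_defect_def
  using colless_mb_double[of x] colless_mb_odd[of y] colless_mb_odd[of "x + y"]
  by (simp add: algebra_simps)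

lemma colless_defect_even_even:
  "1 \<le> y \<Longrightarrow> 1 \<le> x \<Longrightarrow>
    colless_defect (2 * x) (2 * y) = 2 * colless_defect x y"
  unfolding colless_defect_def
  using colless_mb_double[of x] colless_mb_double[of y] colless_mb_double[of "x + y"]
  by (simp add: algebra_simps abs_if)

definition same_dyadic_range :: "nat \<Rightarrow> nat \<Rightarrow> bool" where
  "same_dyadic_range a b \<longleftrightarrow>
    (\<exists>j. 2 ^ j \<le> a \<and> a \<le> 2 ^ (j + 1) \<and> 2 ^ j \<le> b \<and> b \<le> 2 ^ (j + 1))"

lemma same_dyadic_range_commute: "same_dyadic_range a b \<longleftrightarrow> same_dyadic_range b a"
  unfolding same_dyadic_range_def by blast

lemma same_dyadic_range_refl: "1 \<le> a \<Longrightarrow> same_dyadic_range a a"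
  unfolding same_dyadic_range_def using ex_power_ivl1[of 2 a] by fastforce

lemma same_dyadic_range_doubled:
  assumes "same_dyadic_range x y" "2 * y \<le> b" "b \<le> a" "a \<le> 2 * x"
  shows "same_dyadic_range a b"
proof -
  obtain j where "2 ^ j \<le> y" "x \<le> 2 ^ (j + 1)"
    using assms(1) unfolding same_dyadic_range_def by blast
  then have "2 ^ (j + 1) \<le> b" "a \<le> 2 ^ (j + 2)"
    using assms(2-4) by simp_all
  then show ?thesis
    unfolding same_dyadic_range_def using assms(3) by (intro exI[of _ "j + 1"]) simp
qed

lemma halving_cases:
  fixes a b :: nat
  assumes "1 \<le> b" "b \<le> a"
  obtains (diag) "a = b"
  | (even_one) x where "a = 2 * x" "b = 1" "1 \<le> x"
  | (odd_one) x where "a = 2 * x + 1" "b = 1" "1 \<le> x"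
  | (odd_odd) x y where "a = 2 * x + 1" "b = 2 * y + 1" "1 \<le> y" "y < x"
  | (odd_even) x y where "a = 2 * x + 1" "b = 2 * y" "1 \<le> y" "y \<le> x"
  | (even_odd) x y where "a = 2 * x" "b = 2 * y + 1" "1 \<le> y" "y < x"
  | (even_even) x y where "a = 2 * x" "b = 2 * y" "1 \<le> y" "y \<le> x"
proof (cases "a = b")
  case True
  then show ?thesis by (rule diag)
next
  case False
  with assms have "b < a" by simp
  define x y where "x = a div 2" and "y = b div 2"
  have "a = 2 * x \<or> a = 2 * x + 1" "b = 2 * y \<or> b = 2 * y + 1"
    unfolding x_def y_def by presburger+
  then show ?thesis
  proof (elim disjE)
    assume "a = 2 * x" "b = 2 * y"
    with \<open>b < a\<close> assms show ?thesis by (intro even_even[of x y]) simp_all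
  next
    assume "a = 2 * x + 1" "b = 2 * y"
    with \<open>b < a\<close> assms show ?thesis by (intro odd_even[of x y]) simp_all
  next
    assume "a = 2 * x" "b = 2 * y + 1"
    with \<open>b < a\<close> show ?thesis
      by (cases "y = 0") (simp_all add: even_one even_odd)
  next
    assume "a = 2 * x + 1" "b = 2 * y + 1"
    with \<open>b < a\<close> show ?thesis
      by (cases "y = 0") (simp_all add: odd_one odd_odd)
  qed
qed

lemma colless_defect_nonneg_ordered: "1 \<le> b \<Longrightarrow> b \<le> a \<Longrightarrow> 0 \<le> colless_defect a b"
proof (induction "a + b" arbitrary: a b rule: less_induct)
  case less
  note IH = less.hyps
  from less.prems show ?case
  proof (cases rule: halving_cases)
    case diag
    then show ?thesis using less.prems colless_defect_diag by simp
  next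
    case (even_one x)
    then show ?thesis using IH[of x 1] colless_defect_even_one[of x] by simp
  next
    case (odd_one x)
    then show ?thesis using IH[of x 1] colless_defect_odd_one[of x] by simp
  next
    case (odd_odd x y)
    then show ?thesis
      using IH[of "x + 1" y] IH[of x "y + 1"] colless_defect_odd_odd[of y x] by simp
  next
    case (odd_even x y)
    then show ?thesis using IH[of "x + 1" y] IH[of x y] colless_defect_odd_even[of y x] by simp
  next
    case (even_odd x y)
    then show ?thesis using IH[of x "y + 1"] IH[of x y] colless_defect_even_odd[of y x] by simp
  next
    case (even_even x y)
    then show ?thesis using IH[of x y] colless_defect_even_even[of y x] by simp
  qed
qed

lemma same_dyadic_range_if_colless_defect_eq_0_ordered:
  "1 \<le> b \<Longrightarrow> b \<le> a \<Longrightarrow> colless_defect a b = 0 \<Longrightarrow> same_dyadic_range a b"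
proof (induction "a + b" arbitrary: a b rule: less_induct)
  case less
  note IH = less.hyps and nonneg = colless_defect_nonneg_ordered
  from less.prems(1,2) show ?case
  proof (cases rule: halving_cases)
    case diag
    then show ?thesis using less.prems same_dyadic_range_refl by simp
  next
    case (even_one x)
    then have "x = 1"
      using less.prems(3) nonneg[of 1 x] colless_defect_even_one[of x] by simp
    then show ?thesis
      using even_one unfolding same_dyadic_range_def by (intro exI[of _ 0]) simp
  next
    case (odd_one x)
    then show ?thesis using less.prems(3) nonneg[of 1 x] colless_defect_odd_one[of x] by simp
  next
    case (odd_odd x y)
    then show ?thesis
      using less.prems(3) nonneg[of y "x + 1"] nonneg[of "y + 1" x] colless_defect_odd_odd[of y x]
      by simp
  next
    case (odd_even x y)
    then have "colless_defect (x + 1) y = 0"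
      using less.prems(3) nonneg[of y "x + 1"] nonneg[of y x] colless_defect_odd_even[of y x]
      by simp
    then have "same_dyadic_range (x + 1) y" using IH[of "x + 1" y] odd_even by simp
    then show ?thesis using odd_even by (elim same_dyadic_range_doubled) simp_all
  next
    case (even_odd x y)
    then have "colless_defect x y = 0"
      using less.prems(3) nonneg[of "y + 1" x] nonneg[of y x] colless_defect_even_odd[of y x]
      by simp
    then have "same_dyadic_range x y" using IH[of x y] even_odd by simp
    then show ?thesis using even_odd by (elim same_dyadic_range_doubled) simp_all
  next
    case (even_even x y)
    then have "colless_defect x y = 0"
      using less.prems(3) colless_defect_even_even[of y x] by simp
    then have "same_dyadic_range x y" using IH[of x y] even_even by simp
    then show ?thesis using even_even by (elim same_dyadic_range_doubled) simp_all
  qed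
qed

lemma colless_defect_nonneg: "1 \<le> a \<Longrightarrow> 1 \<le> b \<Longrightarrow> 0 \<le> colless_defect a b"
  using colless_defect_nonneg_ordered colless_defect_commute by (metis nle_le)

lemma same_dyadic_range_if_colless_defect_eq_0:
  "1 \<le> a \<Longrightarrow> 1 \<le> b \<Longrightarrow> colless_defect a b = 0 \<Longrightarrow> same_dyadic_range a b"
  using same_dyadic_range_if_colless_defect_eq_0_ordered colless_defect_commute
    same_dyadic_range_commute
  by (metis nle_le)

lemma leaves_ge_1: "1 \<le> leaves t"
  by (induction t) auto

lemma colless_Node_excess:
  "int (colless (Node l r)) - int (colless_mb (leaves (Node l r))) =
    (int (colless l) - int (colless_mb (leaves l))) + (int (colless r) - int (colless_mb (leaves r)))
    + colless_defect (leaves l) (leaves r)"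
  by (simp add: colless_defect_def)

lemma colless_mb_le_colless: "colless_mb (leaves t) \<le> colless t"
proof (induction t)
  case Leaf
  then show ?case by simp
next
  case (Node l r)
  then show ?case
    using colless_Node_excess[of l r] colless_defect_nonneg[OF leaves_ge_1[of l] leaves_ge_1[of r]]
    by linarith
qed

inductive dyadic_balanced :: "btree \<Rightarrow> bool" where
  "dyadic_balanced Leaf"
| "dyadic_balanced l \<Longrightarrow> dyadic_balanced r \<Longrightarrow> same_dyadic_range (leaves l) (leaves r) \<Longrightarrow>
    dyadic_balanced (Node l r)"

lemma dyadic_balanced_if_colless_eq_colless_mb:
  "colless t = colless_mb (leaves t) \<Longrightarrow> dyadic_balanced t"
proof (induction t)
  case Leaf
  show ?case by (rule dyadic_balanced.intros)
next
  case (Node l r)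
  have "colless_mb (leaves l) \<le> colless l" "colless_mb (leaves r) \<le> colless r"
    by (rule colless_mb_le_colless)+
  moreover have "0 \<le> colless_defect (leaves l) (leaves r)"
    by (rule colless_defect_nonneg[OF leaves_ge_1 leaves_ge_1])
  ultimately have "colless l = colless_mb (leaves l)" "colless r = colless_mb (leaves r)"
    "colless_defect (leaves l) (leaves r) = 0"
    using Node.prems colless_Node_excess[of l r] by linarith+
  then show ?case
    using Node.IH same_dyadic_range_if_colless_defect_eq_0[OF leaves_ge_1 leaves_ge_1]
    by (blast intro: dyadic_balanced.intros)
qed

text \<open>The Sackin index of a tree with n leaves all at depth j or j + 1, which exists when
2^j \<le> n \<le> 2^(j+1).\<close>

definition sackin_bound :: "nat \<Rightarrow> nat \<Rightarrow> int" where
  "sackin_bound j n = int n * (int j + 2) - 2 ^ (j + 1)"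

lemma sackin_bound_Suc: "sackin_bound (Suc j) n = sackin_bound j n + int n - 2 ^ (j + 1)"
  by (simp add: sackin_bound_def algebra_simps)

lemma sackin_bound_Suc_add:
  "sackin_bound (Suc j) (a + b) = sackin_bound j a + sackin_bound j b + int a + int b"
  by (simp add: sackin_bound_def algebra_simps)

lemma sackin_bound_le_sackin: "sackin_bound j (leaves t) \<le> int (sackin t)"
proof (induction t arbitrary: j)
  case Leaf
  have "int (j + 1) < 2 ^ (j + 1)"
    using less_exp[of "j + 1"] of_nat_less_numeral_power_cancel_iff by blast
  then show ?case by (simp add: sackin_bound_def)
next
  case (Node l r)
  show ?case
  proof (cases j)
    case 0
    then show ?thesis
      using Node.IH[of 0] leaves_ge_1[of l] leaves_ge_1[of r] by (simp add: sackin_bound_def)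
  next
    case (Suc i)
    then show ?thesis using Node.IH[of i] sackin_bound_Suc_add[of i] by simp
  qed
qed

lemma sackin_bound_le_at_dyadic:
  assumes "2 ^ i \<le> n" "n \<le> 2 ^ (i + 1)"
  shows "sackin_bound j n \<le> sackin_bound i n"
proof (cases "i \<le> j")
  case True
  then show ?thesis
  proof (induction j rule: dec_induct)
    case (step k)
    have "(2::nat) ^ (i + 1) \<le> 2 ^ (k + 1)"
      using step.hyps(1) by (intro power_increasing) simp_all
    then have "int n \<le> 2 ^ (k + 1)"
      using assms(2) of_nat_le_numeral_power_cancel_iff by (metis le_trans)
    then show ?case using step.IH sackin_bound_Suc[of k n] by linarith
  qed simp
next
  case False
  then have "j \<le> i" by simp
  then show ?thesis
  proof (induction j rule: inc_induct)
    case (step k)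
    have "(2::nat) ^ (k + 1) \<le> 2 ^ i"
      using step.hyps(2) by (intro power_increasing) simp_all
    then have "2 ^ (k + 1) \<le> int n"
      using assms(1) numeral_power_le_of_nat_cancel_iff by (metis le_trans)
    then show ?case using step.IH sackin_bound_Suc[of k n] by linarith
  qed simp
qed

lemma sackin_eq_sackin_bound_if_dyadic_balanced:
  "dyadic_balanced t \<Longrightarrow>
    \<exists>j. 2 ^ j \<le> leaves t \<and> leaves t \<le> 2 ^ (j + 1) \<and> int (sackin t) = sackin_bound j (leaves t)"
proof (induction t rule: dyadic_balanced.induct)
  case 1
  then show ?case by (intro exI[of _ 0]) (simp add: sackin_bound_def)
next
  case (2 l r)
  obtain i where i: "2 ^ i \<le> leaves l" "leaves l \<le> 2 ^ (i + 1)"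
    "2 ^ i \<le> leaves r" "leaves r \<le> 2 ^ (i + 1)"
    using 2(3) unfolding same_dyadic_range_def by blast
  have "int (sackin l) = sackin_bound i (leaves l)"
    using 2(4) sackin_bound_le_sackin[of i l] sackin_bound_le_at_dyadic[OF i(1,2)]
    by (metis order_antisym)
  moreover have "int (sackin r) = sackin_bound i (leaves r)"
    using 2(5) sackin_bound_le_sackin[of i r] sackin_bound_le_at_dyadic[OF i(3,4)]
    by (metis order_antisym)
  ultimately show ?case
    using i sackin_bound_Suc_add[of i "leaves l" "leaves r"] by (intro exI[of _ "Suc i"]) simp
qed

lemma colless_eq_colless_mb_if_min_colless:
  assumes "t \<in> min_colless_trees n"
  shows "colless t = colless_mb (leaves t)"
proof -
  have n: "leaves t = n"
    using assms by (simp add: min_colless_trees_def trees_with_def)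
  then have "mb_tree n \<in> trees_with n"
    using leaves_ge_1[of t] leaves_mb_tree by (simp add: trees_with_def)
  then have "colless t \<le> colless_mb n"
    using assms leaves_ge_1[of t] colless_mb_tree n by (force simp: min_colless_trees_def)
  then show ?thesis using colless_mb_le_colless[of t] n by simp
qed

lemma min_colless_trees_subset_min_sackin_trees:
  "min_colless_trees n \<subseteq> min_sackin_trees n"
proof
  fix t
  assume t: "t \<in> min_colless_trees n"
  then have n: "leaves t = n"
    by (simp add: min_colless_trees_def trees_with_def)
  have "dyadic_balanced t"
    using t by (intro dyadic_balanced_if_colless_eq_colless_mb colless_eq_colless_mb_if_min_colless)
  then obtain j where j: "int (sackin t) = sackin_bound j n"
    using sackin_eq_sackin_bound_if_dyadic_balanced n by blast
  have "sackin t \<le> sackin t'" if "t' \<in> trees_with n" for t'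
    using that j sackin_bound_le_sackin[of j t'] by (simp add: trees_with_def)
  then show "t \<in> min_sackin_trees n"
    using n by (simp add: min_sackin_trees_def trees_with_def)
qed

lemma finite_trees_with: "finite (trees_with n)"
proof (induction n rule: less_induct)
  case (less n)
  have "trees_with n \<subseteq>
      insert Leaf (\<Union>a\<in>{1..<n}. case_prod Node ` (trees_with a \<times> trees_with (n - a)))"
  proof
    fix t
    assume "t \<in> trees_with n"
    then show "t \<in> insert Leaf (\<Union>a\<in>{1..<n}. case_prod Node ` (trees_with a \<times> trees_with (n - a)))"
    proof (cases t)
      case (Node l r)
      with \<open>t \<in> trees_with n\<close> have
        "leaves l \<in> {1..<n}" "(l, r) \<in> trees_with (leaves l) \<times> trees_with (n - leaves l)"
        using leaves_ge_1[of l] leaves_ge_1[of r] by (auto simp: trees_with_def)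
      then show ?thesis
        unfolding Node by (intro insertI2 UN_I image_eqI[of _ _ "(l, r)"]) simp_all
    qed simp
  qed
  moreover have "finite (\<Union>a\<in>{1..<n}. case_prod Node ` (trees_with a \<times> trees_with (n - a)))"
    using less.IH by auto
  ultimately show ?case by (simp add: finite_subset)
qed

lemma card_quotient_mono:
  assumes "A \<subseteq> B" "finite B"
  shows "card (A // r) \<le> card (B // r)"
proof (rule card_mono)
  show "finite (B // r)"
    using assms(2) by (simp add: quotient_def)
  show "A // r \<subseteq> B // r"
    using assms(1) by (auto simp: quotient_def)
qed

theorem corollary4:
  fixes n :: nat
  assumes "n \<ge> 1"
  shows "c_tilde n \<le> s_tilde n"
proof -
  have "finite (min_sackin_trees n)"
    using finite_trees_with[of n] by (rule finite_subset[rotated]) (simp add: min_sackin_trees_def)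
  then show ?thesis
    unfolding c_tilde_def s_tilde_def
    using min_colless_trees_subset_min_sackin_trees by (rule card_quotient_mono[rotated])
qed

end
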